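(* There exist constants $C,c>0$ such that for every $x\in\mathbb Z_{\ge0}$, all integers $0\le m<k\le n$ and every $u>0$, $$\mathbf P^n_x\Big(\sup_{m\le i\le k}|S_i-S_m|>u\Big)\le C\,e^{-cu^2/(k-m)}.$$ (In particular, with $m=0$, $\mathbf P^n_x(\sup_{0\le i\le k}|S_i-x|>u)\le Ce^{-cu^2/k}$; one can take $c=1/32$.)
   Context: $\mathbf P^n_x$ is the uniform probability measure on the finite set of paths $(s_0,\dots,s_n)\in\mathbb Z_{\ge0}^{n+1}$ with $s_0=x$ and $|s_{i+1}-s_i|=1$ for all $i$ (simple symmetric random walk conditioned to stay non-negative up to time $n$), and $S=(S_i)_{i=0}^n$ is its coordinate process. *)

theory Defs
  imports "HOL-Probability.Probability"
begin

text \<open>A path (s_0,...,s_n) is encoded as a function nat => int that is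
  extended by 0 beyond index n (so the set of encodings is in bijection
  with the paths).\<close>
definition nn_paths :: "nat \<Rightarrow> int \<Rightarrow> (nat \<Rightarrow> int) set" where
  "nn_paths n x = {s. s 0 = x \<and> (\<forall>i\<le>n. 0 \<le> s i)
      \<and> (\<forall>i<n. \<bar>s (Suc i) - s i\<bar> = 1) \<and> (\<forall>i>n. s i = 0)}"

definition Pnx :: "nat \<Rightarrow> int \<Rightarrow> (nat \<Rightarrow> int) pmf" where
  "Pnx n x = pmf_of_set (nn_paths n x)"

end

theory Submission
  imports Defs
begin

text \<open>Let \<open>N\<^sub>r(z)\<close> be the number of nonnegative paths of length \<open>r\<close> from \<open>z\<close>. The uniform
  measure on nonnegative paths is the Markov chain stepping from \<open>z\<close> to \<open>z \<plusminus> 1\<close> with weights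
  \<open>N\<^sub>r(z \<plusminus> 1)\<close>, so by the Markov property at time \<open>m\<close> it suffices to bound, uniformly in the
  starting point, the probability of moving by more than \<open>u\<close> within \<open>k - m\<close> steps.
  Since \<open>N\<^sub>r(z - 1) \<le> N\<^sub>r(z + 1)\<close>, the chain drifts upwards and \<open>exp (-l S)\<close> grows by at most a
  factor \<open>cosh l\<close> per step; this controls downward excursions. Upward excursions are controlled
  in the same way by \<open>sinh (l (S + 1)) / (S + 1)\<close>, using the reflection-principle bound
  \<open>z N\<^sub>r(z + 1) \<le> (z + 2) N\<^sub>r(z - 1)\<close>. Optional stopping with \<open>l \<approx> u / (2 (k - m))\<close> gives the
  Gaussian tail with \<open>c = 1/8\<close>.\<close>

fun walks :: "nat \<Rightarrow> int \<Rightarrow> nat" where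
  "walks 0 d = (if d = 0 then 1 else 0)"
| "walks (Suc r) d = walks r (d - 1) + walks r (d + 1)"

lemma walks_uminus: "walks r (- d) = walks r d"
proof (induction r arbitrary: d)
  case 0
  then show ?case by simp
next
  case (Suc r)
  have "- d - 1 = - (d + 1)" "- d + 1 = - (d - 1)"
    by simp_all
  then show ?case by (simp only: walks.simps Suc.IH)
qed

lemma walks_add_two_le:
  assumes "0 \<le> d"
  shows "walks r (d + 2) \<le> walks r d"
  using assms
proof (induction r arbitrary: d)
  case 0
  then show ?case by simp
next
  case (Suc r)
  have "walks r (d + 3) \<le> walks r (d - 1)"
  proof (cases "d = 0")
    case True
    then show ?thesis using Suc.IH[of 1] walks_uminus[of r 1] by simp
  next
    case False
    then have "walks r (d + 1 + 2) \<le> walks r (d + 1)" "walks r (d - 1 + 2) \<le> walks r (d - 1)"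
      using Suc.IH[of "d + 1"] Suc.IH[of "d - 1"] Suc.prems by simp_all
    then show ?thesis by (simp add: algebra_simps)
  qed
  then show ?case by (simp add: algebra_simps)
qed

text \<open>\<open>walks_window r z\<close> is \<open>\<Sum>d = -(z+1)..z. walks r d\<close>; by the reflection principle it
  counts the nonnegative paths of length \<open>r\<close> from \<open>z\<close> (lemma \<open>nn_count_eq_walks_window\<close>).\<close>
primrec walks_window :: "nat \<Rightarrow> nat \<Rightarrow> nat" where
  "walks_window r 0 = walks r 0 + walks r 1"
| "walks_window r (Suc z) = walks_window r z + walks r (int z + 1) + walks r (int z + 2)"

lemma walks_window_zero_length: "walks_window 0 z = 1"
  by (induction z) auto

lemma walks_window_Suc_length:
  "walks_window (Suc r) z = walks_window r (Suc z) + (case z of 0 \<Rightarrow> 0 | Suc z' \<Rightarrow> walks_window r z')"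
proof (induction z)
  case 0
  then show ?case using walks_uminus[of r 1] by simp
next
  case (Suc z)
  then show ?case by (cases z) (simp_all add: algebra_simps)
qed

text \<open>The window consists of \<open>z + 1\<close> pairs of adjacent terms, and by unimodality of
  \<open>walks r\<close> none of them is smaller than the outermost one.\<close>
lemma walks_window_ge_last_pair:
  "(z + 1) * (walks r (int z + 1) + walks r (int z + 2)) \<le> walks_window r z"
proof (induction z)
  case 0
  then show ?case using walks_add_two_le[of 0 r] by simp
next
  case (Suc z)
  have last: "walks r (int z + 3) \<le> walks r (int z + 1)"
    using walks_add_two_le[of "int z + 1" r] by (simp add: add.assoc)
  then have "(z + 1) * (walks r (int z + 2) + walks r (int z + 3))
      \<le> (z + 1) * (walks r (int z + 1) + walks r (int z + 2))"
    by (intro mult_le_mono2) simp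
  with Suc.IH last show ?case
    by (simp add: algebra_simps del: walks.simps)
qed

lemma walks_window_Suc_le: "(z + 1) * walks_window r (Suc z) \<le> (z + 2) * walks_window r z"
  using walks_window_ge_last_pair[of z r] by (simp add: algebra_simps)

definition path_cons :: "int \<Rightarrow> (nat \<Rightarrow> int) \<Rightarrow> nat \<Rightarrow> int" where
  "path_cons z t = (\<lambda>i. if i = 0 then z else t (i - 1))"

definition path_tl :: "(nat \<Rightarrow> int) \<Rightarrow> nat \<Rightarrow> int" where
  "path_tl s = (\<lambda>i. s (Suc i))"

definition path_drop :: "nat \<Rightarrow> (nat \<Rightarrow> int) \<Rightarrow> nat \<Rightarrow> int" where
  "path_drop m s = (\<lambda>i. s (i + m))"

lemma path_tl_path_cons [simp]: "path_tl (path_cons z t) = t"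
  by (simp add: path_tl_def path_cons_def)

lemma inj_path_cons: "inj (path_cons z)"
  by (metis injI path_tl_path_cons)

lemma path_drop_Suc: "path_drop (Suc m) s = path_drop m (path_tl s)"
  by (simp add: path_drop_def path_tl_def)

lemma nn_paths_start: "s \<in> nn_paths r z \<Longrightarrow> s 0 = z"
  by (simp add: nn_paths_def)

lemma nn_paths_neg: "z < 0 \<Longrightarrow> nn_paths r z = {}"
  by (auto simp: nn_paths_def)

lemma nn_paths_0: "0 \<le> z \<Longrightarrow> nn_paths 0 z = {\<lambda>i. if i = 0 then z else 0}"
  by (auto simp: nn_paths_def)

lemma nn_paths_Suc:
  assumes "0 \<le> z"
  shows "nn_paths (Suc r) z = path_cons z ` (nn_paths r (z + 1) \<union> nn_paths r (z - 1))"
proof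
  show "nn_paths (Suc r) z \<subseteq> path_cons z ` (nn_paths r (z + 1) \<union> nn_paths r (z - 1))"
  proof
    fix s assume s: "s \<in> nn_paths (Suc r) z"
    have "s = path_cons z (path_tl s)"
      using s by (auto simp: path_cons_def path_tl_def nn_paths_def)
    moreover have "s 1 = z + 1 \<or> s 1 = z - 1"
      using s by (auto simp: nn_paths_def abs_if split: if_splits)
    moreover have "path_tl s \<in> nn_paths r (s 1)"
      using s by (auto simp: nn_paths_def path_tl_def)
    ultimately show "s \<in> path_cons z ` (nn_paths r (z + 1) \<union> nn_paths r (z - 1))"
      by (metis UnI1 UnI2 image_eqI)
  qed
next
  show "path_cons z ` (nn_paths r (z + 1) \<union> nn_paths r (z - 1)) \<subseteq> nn_paths (Suc r) z"
  proof
    fix s assume "s \<in> path_cons z ` (nn_paths r (z + 1) \<union> nn_paths r (z - 1))"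
    then obtain t where s: "s = path_cons z t"
      and t: "t \<in> nn_paths r (z + 1) \<or> t \<in> nn_paths r (z - 1)" by blast
    have "\<bar>t 0 - z\<bar> = 1" "\<forall>i\<le>r. 0 \<le> t i" "\<forall>i<r. \<bar>t (Suc i) - t i\<bar> = 1" "\<forall>i>r. t i = 0"
      using t by (auto simp: nn_paths_def)
    then show "s \<in> nn_paths (Suc r) z"
      using assms by (auto simp: nn_paths_def s path_cons_def less_Suc_eq_0_disj)
  qed
qed

lemma finite_nn_paths: "finite (nn_paths r z)"
proof (induction r arbitrary: z)
  case 0
  then show ?case by (cases "0 \<le> z") (simp_all add: nn_paths_0 nn_paths_neg)
next
  case (Suc r)
  then show ?case by (cases "0 \<le> z") (simp_all add: nn_paths_Suc nn_paths_neg)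
qed

lemma card_nn_paths_Suc_filter:
  assumes "0 \<le> z"
  shows "card {s \<in> nn_paths (Suc r) z. R (path_tl s)}
       = card {t \<in> nn_paths r (z + 1). R t} + card {t \<in> nn_paths r (z - 1). R t}"
proof -
  have "{s \<in> nn_paths (Suc r) z. R (path_tl s)}
      = path_cons z ` ({t \<in> nn_paths r (z + 1). R t} \<union> {t \<in> nn_paths r (z - 1). R t})"
    unfolding nn_paths_Suc[OF assms] by auto
  also have "card \<dots> = card ({t \<in> nn_paths r (z + 1). R t} \<union> {t \<in> nn_paths r (z - 1). R t})"
    by (rule card_image) (meson inj_path_cons inj_on_subset subset_UNIV)
  also have "\<dots> = card {t \<in> nn_paths r (z + 1). R t} + card {t \<in> nn_paths r (z - 1). R t}"
  proof (rule card_Un_disjoint)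
    show "{t \<in> nn_paths r (z + 1). R t} \<inter> {t \<in> nn_paths r (z - 1). R t} = {}"
      by (auto simp: nn_paths_def)
  qed (simp_all add: finite_nn_paths)
  finally show ?thesis .
qed

definition nn_count :: "nat \<Rightarrow> int \<Rightarrow> nat" where
  "nn_count r z = card (nn_paths r z)"

lemma nn_count_Suc: "0 \<le> z \<Longrightarrow> nn_count (Suc r) z = nn_count r (z + 1) + nn_count r (z - 1)"
  using card_nn_paths_Suc_filter[of z r "\<lambda>_. True"] by (simp add: nn_count_def)

lemma nn_count_neg: "z < 0 \<Longrightarrow> nn_count r z = 0"
  by (simp add: nn_count_def nn_paths_neg)

lemma nn_count_pos: "0 \<le> z \<Longrightarrow> 0 < nn_count r z"
proof (induction r arbitrary: z)
  case 0
  then show ?case by (simp add: nn_count_def nn_paths_0)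
next
  case (Suc r)
  then show ?case using nn_count_Suc[of z r] Suc.IH[of "z + 1"] by simp
qed

lemma card_nn_paths_filter_le: "card {s \<in> nn_paths r z. P s} \<le> nn_count r z"
  unfolding nn_count_def by (rule card_mono) (auto simp: finite_nn_paths)

lemma card_nn_paths_filter_le_mult:
  fixes c :: real
  assumes "1 \<le> c"
  shows "real (card {s \<in> nn_paths r z. P s}) \<le> real (nn_count r z) * c"
proof -
  have "real (card {s \<in> nn_paths r z. P s}) \<le> real (nn_count r z)"
    using card_nn_paths_filter_le by simp
  also have "\<dots> \<le> real (nn_count r z) * c"
    using mult_left_mono[OF assms, of "real (nn_count r z)"] by simp
  finally show ?thesis .
qed

lemma nn_count_eq_walks_window: "nn_count r (int z) = walks_window r z"
proof (induction r arbitrary: z)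
  case 0
  then show ?case by (simp add: nn_count_def nn_paths_0 walks_window_zero_length)
next
  case (Suc r)
  have "nn_count (Suc r) (int z) = nn_count r (int (Suc z)) + nn_count r (int z - 1)"
    by (simp add: nn_count_Suc add.commute)
  also have "\<dots> = walks_window (Suc r) z"
  proof (cases z)
    case 0
    then show ?thesis using Suc.IH[of 1] walks_uminus[of r 1]
      by (simp add: nn_count_neg walks_window_Suc_length)
  next
    case (Suc z')
    then have "int z - 1 = int z'" by simp
    then show ?thesis using Suc.IH[of "Suc z"] Suc.IH[of z'] \<open>z = Suc z'\<close>
      by (simp only: walks_window_Suc_length nat.case)
  qed
  finally show ?case .
qed

lemma nn_count_le_Suc: "0 \<le> z \<Longrightarrow> nn_count r z \<le> nn_count r (z + 1)"
  by (metis nonneg_eq_int nn_count_eq_walks_window walks_window.simps(2) le_add1 add.commute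
      of_nat_Suc order_trans)

lemma nn_count_diff_le_add: "0 \<le> z \<Longrightarrow> nn_count r (z - 1) \<le> nn_count r (z + 1)"
proof (cases "z = 0")
  case True
  then show ?thesis by (simp add: nn_count_neg)
next
  case False
  assume "0 \<le> z"
  then show ?thesis
    using nn_count_le_Suc[of "z - 1" r] nn_count_le_Suc[of z r] False by simp
qed

lemma nn_count_Suc_ratio: "0 \<le> z \<Longrightarrow> (z + 1) * int (nn_count r (z + 1)) \<le> (z + 2) * int (nn_count r z)"
proof -
  assume "0 \<le> z"
  then obtain n where n: "z = int n" by (metis nonneg_eq_int)
  have "int ((n + 1) * walks_window r (Suc n)) \<le> int ((n + 2) * walks_window r n)"
    by (simp only: of_nat_le_iff walks_window_Suc_le)
  then show ?thesis
    using nn_count_eq_walks_window[of r n] nn_count_eq_walks_window[of r "Suc n"] n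
    by (simp add: algebra_simps del: walks_window.simps)
qed

lemma nn_count_ratio:
  assumes z: "1 \<le> z"
  shows "z * int (nn_count r (z + 1)) \<le> (z + 2) * int (nn_count r (z - 1))"
proof -
  have a: "(z + 1) * int (nn_count r (z + 1)) \<le> (z + 2) * int (nn_count r z)"
    using nn_count_Suc_ratio z by simp
  have b: "z * int (nn_count r z) \<le> (z + 1) * int (nn_count r (z - 1))"
    using nn_count_Suc_ratio[of "z - 1" r] z by (simp add: add.commute)
  have "(z + 1) * (z * int (nn_count r (z + 1))) = z * ((z + 1) * int (nn_count r (z + 1)))"
    by (simp add: algebra_simps)
  also have "\<dots> \<le> z * ((z + 2) * int (nn_count r z))"
    using a z by (intro mult_left_mono) simp_all
  also have "\<dots> = (z + 2) * (z * int (nn_count r z))"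
    by (simp add: algebra_simps)
  also have "\<dots> \<le> (z + 2) * ((z + 1) * int (nn_count r (z - 1)))"
    using b z by (intro mult_left_mono) simp_all
  also have "\<dots> = (z + 1) * ((z + 2) * int (nn_count r (z - 1)))"
    by (simp add: algebra_simps)
  finally show ?thesis using z by (simp add: mult_le_cancel_left)
qed

lemma nn_paths_hit_Suc_iff:
  assumes "s \<in> nn_paths r z" "\<not> T z"
  shows "(\<exists>i\<le>Suc j. T (s i)) \<longleftrightarrow> (\<exists>i\<le>j. T (path_tl s i))"
  using assms nn_paths_start[OF assms(1)] unfolding path_tl_def
  by (metis Suc_le_mono le0 not0_implies_Suc)

text \<open>Optional stopping in counting form: \<open>step\<close> says that \<open>h\<close> is \<open>\<rho>\<close>-superharmonic for the
  walk conditioned to stay nonnegative.\<close>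
lemma card_nn_paths_hitting_le:
  fixes h :: "int \<Rightarrow> real" and \<rho> :: real
  assumes nonneg: "\<And>z. 0 \<le> z \<Longrightarrow> 0 \<le> h z"
    and target: "\<And>z. T z \<Longrightarrow> 1 \<le> h z"
    and rho: "1 \<le> \<rho>"
    and step: "\<And>r z. 0 \<le> z \<Longrightarrow>
      real (nn_count r (z + 1)) * h (z + 1) + real (nn_count r (z - 1)) * h (z - 1)
        \<le> real (nn_count (Suc r) z) * \<rho> * h z"
    and "j \<le> r"
  shows "real (card {s \<in> nn_paths r z. \<exists>i\<le>j. T (s i)}) \<le> real (nn_count r z) * h z * \<rho> ^ j"
  using \<open>j \<le> r\<close>
proof (induction j arbitrary: r z)
  case 0
  show ?case
  proof (cases "T z")
    case True
    then show ?thesis using card_nn_paths_filter_le_mult target by simp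
  next
    case False
    then have none: "{s \<in> nn_paths r z. \<exists>i\<le>0. T (s i)} = {}"
      by (auto dest: nn_paths_start)
    show ?thesis unfolding none using nonneg[of z] nn_count_neg[of z r] by (cases "0 \<le> z") simp_all
  qed
next
  case (Suc j)
  then obtain r' where r: "r = Suc r'" "j \<le> r'" by (cases r) auto
  consider "z < 0" | "T z" | "0 \<le> z" "\<not> T z" by linarith
  then show ?case
  proof cases
    case 1
    then show ?thesis by (simp add: nn_paths_neg nn_count_neg)
  next
    case 2
    have "1 \<le> h z * \<rho> ^ Suc j"
      using mult_mono[OF target[OF 2] one_le_power[OF rho], of "Suc j"] target[OF 2] by simp
    then show ?thesis using card_nn_paths_filter_le_mult by (simp add: mult.assoc)
  next
    case 3
    let ?E = "\<lambda>t. \<exists>i\<le>j. T (t i)"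
    have "real (card {s \<in> nn_paths r z. \<exists>i\<le>Suc j. T (s i)})
        = real (card {s \<in> nn_paths (Suc r') z. ?E (path_tl s)})"
      using nn_paths_hit_Suc_iff[of _ r z T j] 3 r by (metis (lifting))
    also have "\<dots> = real (card {t \<in> nn_paths r' (z + 1). ?E t}) + real (card {t \<in> nn_paths r' (z - 1). ?E t})"
      using card_nn_paths_Suc_filter[OF \<open>0 \<le> z\<close>, of r' ?E] by simp
    also have "\<dots> \<le> (real (nn_count r' (z + 1)) * h (z + 1) + real (nn_count r' (z - 1)) * h (z - 1))
        * \<rho> ^ j"
      using Suc.IH[OF r(2), of "z + 1"] Suc.IH[OF r(2), of "z - 1"] by (simp add: algebra_simps)
    also have "\<dots> \<le> real (nn_count r z) * \<rho> * h z * \<rho> ^ j"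
      using step[OF \<open>0 \<le> z\<close>, of r'] rho r by (intro mult_right_mono) simp_all
    finally show ?thesis by (simp add: algebra_simps)
  qed
qed

lemma sinh_le_two_mult_cosh:
  fixes u :: real
  assumes "0 \<le> u"
  shows "sinh u \<le> 2 * u * cosh u"
proof (cases "u \<ge> 1")
  case True
  have "sinh u \<le> cosh u" by (rule sinh_le_cosh_real)
  also have "\<dots> \<le> 2 * u * cosh u"
    using mult_right_mono[of 1 u "cosh u"] True by simp
  finally show ?thesis .
next
  case False
  have "exp u \<le> 1 + u + u\<^sup>2" using exp_bound[of u] assms False by simp
  moreover have "1 - u \<le> exp (- u)" using exp_ge_add_one_self[of "- u"] by simp
  ultimately have "sinh u \<le> (1 + u + u\<^sup>2 - (1 - u)) / 2" by (simp add: sinh_field_def)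
  also have "\<dots> \<le> 2 * u"
    using assms False mult_right_mono[of u 2 u] by (simp add: power2_eq_square)
  also have "\<dots> \<le> 2 * u * cosh u"
    using mult_left_mono[OF cosh_real_ge_1[of u], of "2 * u"] assms by simp
  finally show ?thesis .
qed

lemma cosh_le_exp_square:
  fixes l :: real
  assumes "0 \<le> l"
  shows "cosh l \<le> exp (l\<^sup>2)"
proof (cases "l \<ge> 1")
  case True
  have "cosh l \<le> exp l" using assms by (simp add: cosh_field_def)
  also have "\<dots> \<le> exp (l\<^sup>2)" using True by (simp add: power2_eq_square)
  finally show ?thesis .
next
  case False
  have pos: "0 < 1 + l" using assms by simp
  have "exp l \<le> 1 + l + l\<^sup>2" using exp_bound[of l] assms False by simp
  moreover have "exp (- l) \<le> 1 - l + l\<^sup>2"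
  proof -
    have "exp (- l) = 1 / exp l" by (simp add: exp_minus field_simps)
    also have "\<dots> \<le> 1 / (1 + l)"
      using exp_ge_add_one_self[of l] pos by (intro divide_left_mono) simp_all
    also have "\<dots> \<le> 1 - l + l\<^sup>2" using pos assms by (simp add: field_simps power2_eq_square)
    finally show ?thesis .
  qed
  ultimately have "cosh l \<le> 1 + l\<^sup>2" by (simp add: cosh_field_def)
  also have "\<dots> \<le> exp (l\<^sup>2)" using exp_ge_add_one_self[of "l\<^sup>2"] by simp
  finally show ?thesis .
qed

lemma cosh_power_le_exp:
  fixes l :: real
  assumes "0 \<le> l"
  shows "cosh l ^ n \<le> exp (l\<^sup>2 * n)"
proof -
  have "cosh l ^ n \<le> exp (l\<^sup>2) ^ n"
    using cosh_le_exp_square[OF assms] by (intro power_mono) simp_all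
  then show ?thesis by (simp add: mult.commute flip: exp_of_nat_mult)
qed

lemma sinh_mult_add_le:
  fixes u v :: real
  assumes u: "0 < u" and v: "0 \<le> v"
  shows "sinh u * (u + v) \<le> 4 * (1 + v) * exp (- v) * u * sinh (u + v)"
proof -
  have cosh_v: "1 \<le> 2 * exp (- v) * cosh v" by (simp add: cosh_field_def exp_minus field_simps)
  have sinh_v: "v \<le> 2 * (1 + v) * exp (- v) * sinh v"
  proof -
    have "exp (2 * v) = exp v * exp v" by (metis mult_exp_exp mult_2)
    then have "2 * (1 + v) * exp (- v) * sinh v = (1 + v) - (1 + v) * (1 / exp (2 * v))"
      by (simp add: sinh_field_def exp_minus field_simps)
    moreover have "1 + v \<le> exp (2 * v)"
      using exp_ge_add_one_self[of "2 * v"] v by linarith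
    then have "(1 + v) * (1 / exp (2 * v)) \<le> 1"
      by (simp add: field_simps)
    ultimately show ?thesis by linarith
  qed
  have "u * sinh u \<le> 4 * (1 + v) * exp (- v) * u * (sinh u * cosh v)"
  proof -
    have "1 \<le> (2 * exp (- v) * cosh v) * (2 * (1 + v))"
      using cosh_v v by (smt (verit) mult_le_cancel_left1 mult_nonneg_nonneg)
    from mult_left_mono[OF this, of "u * sinh u"] u show ?thesis by (simp add: algebra_simps)
  qed
  moreover have "v * sinh u \<le> 4 * (1 + v) * exp (- v) * u * (cosh u * sinh v)"
  proof -
    have "v * sinh u \<le> (2 * (1 + v) * exp (- v) * sinh v) * sinh u"
      using sinh_v u by (intro mult_right_mono) simp_all
    also have "\<dots> \<le> (2 * (1 + v) * exp (- v) * sinh v) * (2 * u * cosh u)"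
      using sinh_le_two_mult_cosh[of u] u v by (intro mult_left_mono) simp_all
    finally show ?thesis by (simp add: algebra_simps)
  qed
  ultimately show ?thesis by (simp add: sinh_add algebra_simps)
qed

lemma sinh_add_plus_sinh_diff: "sinh (x + l) + sinh (x - l) = 2 * cosh l * sinh (x :: real)"
  by (simp add: sinh_add sinh_diff)

text \<open>The discrete counterpart of \<open>sinh (l x) / x\<close>, the exponential martingale of the
  three-dimensional Bessel process, into which the walk conditioned to stay nonnegative rescales.\<close>
definition up_potential :: "real \<Rightarrow> real \<Rightarrow> real" where
  "up_potential l w = sinh (l * (w + 1)) / (w + 1)"

lemma up_potential_pos: "0 < l \<Longrightarrow> 0 \<le> w \<Longrightarrow> 0 < up_potential l w"
  by (simp add: up_potential_def)

text \<open>The increments of \<open>k \<mapsto> sinh (l k)\<close> increase, and \<open>sinh (l (n + 1))\<close> is the sum of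
  the first \<open>n + 1\<close> of them.\<close>
lemma sinh_le_mult_increment:
  fixes l :: real
  assumes l: "0 \<le> l"
  shows "sinh (l * (real n + 1)) \<le> (real n + 1) * (sinh (l * (real n + 2)) - sinh (l * (real n + 1)))"
proof (induction n)
  case 0
  have "sinh l \<le> sinh l * cosh l"
    using l cosh_real_ge_1[of l] mult_left_mono[of 1 "cosh l" "sinh l"] by simp
  then show ?case using sinh_double[of l] by (simp add: mult.commute)
next
  case (Suc n)
  let ?G = "\<lambda>k::real. sinh (l * (k + 1))"
  have "?G (real n + 2) + ?G (real n) = 2 * cosh l * ?G (real n + 1)"
    using sinh_add_plus_sinh_diff[of "l * (real n + 2)" l] by (simp add: algebra_simps)
  moreover have "?G (real n + 1) \<le> cosh l * ?G (real n + 1)"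
    using l cosh_real_ge_1[of l] mult_right_mono[of 1 "cosh l"] by simp
  ultimately have "?G (real n + 1) - ?G (real n) \<le> ?G (real n + 2) - ?G (real n + 1)"
    by linarith
  moreover have "?G (real n + 1) \<le> (real n + 2) * (?G (real n + 1) - ?G (real n))"
    using Suc by (simp add: algebra_simps)
  ultimately have "?G (real n + 1) \<le> (real n + 2) * (?G (real n + 2) - ?G (real n + 1))"
    by (smt (verit) mult_left_mono of_nat_0_le_iff)
  then show ?case by (simp add: algebra_simps)
qed

lemma up_potential_mono:
  assumes "0 \<le> l" "0 \<le> z" "z \<le> z'"
  shows "up_potential l (of_int z) \<le> up_potential l (of_int z')"
proof -
  have Suc: "up_potential l (real n) \<le> up_potential l (real (Suc n))" for n
  proof -
    have "sinh (l * (real n + 1)) * (real n + 2) \<le> sinh (l * (real n + 2)) * (real n + 1)"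
      using sinh_le_mult_increment[OF assms(1), of n] by (simp add: algebra_simps)
    then show ?thesis by (simp add: up_potential_def field_simps add.commute)
  qed
  obtain m n where "z = int m" "z' = int n" "m \<le> n"
    using assms by (metis nonneg_eq_int order_trans of_nat_le_iff)
  then show ?thesis using lift_Suc_mono_le[of "\<lambda>k. up_potential l (real k)", OF Suc] by simp
qed

lemma weighted_mean_le:
  fixes x A B g0 g1 :: real
  assumes x: "0 < x" and g: "(x + 2) * g0 \<le> x * g1" and AB: "x * A \<le> (x + 2) * B"
  shows "A * (g1 / (x + 2)) + B * (g0 / x) \<le> (A + B) * ((g1 + g0) / (2 * (x + 1)))"
proof -
  define D where "D = 2 * x * (x + 1) * (x + 2)"
  have nz: "x \<noteq> 0" "x + 1 \<noteq> 0" "x + 2 \<noteq> 0" using x by linarith+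
  have "D * (A * (g1 / (x + 2))) = 2 * x * (x + 1) * A * g1"
    "D * (B * (g0 / x)) = 2 * (x + 1) * (x + 2) * B * g0"
    using nz by (simp_all add: D_def field_simps)
  then have "D * (A * (g1 / (x + 2)) + B * (g0 / x)) = 2 * (x + 1) * (x * A * g1 + (x + 2) * B * g0)"
    by (simp add: algebra_simps)
  also have "\<dots> \<le> x * (x + 2) * (A + B) * (g1 + g0)"
  proof -
    have "x * (x + 2) * (A + B) * (g1 + g0) - 2 * (x + 1) * (x * A * g1 + (x + 2) * B * g0)
        = (x * g1 - (x + 2) * g0) * ((x + 2) * B - x * A)"
      by (simp add: algebra_simps)
    also have "\<dots> \<ge> 0" using g AB by simp
    finally show ?thesis by simp
  qed
  also have "\<dots> = D * ((A + B) * ((g1 + g0) / (2 * (x + 1))))"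
    using nz by (simp add: D_def field_simps)
  finally have "D * (A * (g1 / (x + 2)) + B * (g0 / x)) \<le> D * ((A + B) * ((g1 + g0) / (2 * (x + 1))))" .
  moreover have "0 < D" using x by (simp add: D_def)
  ultimately show ?thesis by (simp only: mult_le_cancel_left_pos)
qed

lemma up_potential_step:
  fixes l A B :: real and z :: int
  assumes l: "0 < l" and z: "0 \<le> z" and A: "0 \<le> A" and B: "0 \<le> B"
    and ratio: "z * A \<le> (z + 2) * B"
  shows "A * up_potential l (z + 1) + B * up_potential l (z - 1) \<le> (A + B) * cosh l * up_potential l z"
proof (cases "z = 0")
  case True
  then show ?thesis
    using sinh_double[of l] l B by (simp add: up_potential_def algebra_simps)
next
  case False
  define x where "x = real_of_int z"
  have x: "0 < x" using False z by (simp add: x_def)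
  have "up_potential l (z - 1) \<le> up_potential l (z + 1)"
    using up_potential_mono[of l "z - 1" "z + 1"] False l z by simp
  then have "(x + 2) * sinh (l * x) \<le> x * sinh (l * (x + 2))"
    using x by (simp add: up_potential_def x_def field_simps)
  moreover have "x * A \<le> (x + 2) * B"
    using ratio by (simp add: x_def)
  ultimately have "A * (sinh (l * (x + 2)) / (x + 2)) + B * (sinh (l * x) / x)
      \<le> (A + B) * ((sinh (l * (x + 2)) + sinh (l * x)) / (2 * (x + 1)))"
    by (rule weighted_mean_le[OF x])
  moreover have "sinh (l * (x + 2)) + sinh (l * x) = 2 * cosh l * sinh (l * (x + 1))"
    using sinh_add_plus_sinh_diff[of "l * (x + 1)" l] by (simp add: algebra_simps)
  then have "(A + B) * cosh l * up_potential l z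
      = (A + B) * ((sinh (l * (x + 2)) + sinh (l * x)) / (2 * (x + 1)))"
    using x by (simp add: up_potential_def x_def field_simps)
  moreover have "up_potential l (z + 1) = sinh (l * (x + 2)) / (x + 2)"
    "up_potential l (z - 1) = sinh (l * x) / x"
    by (simp_all add: up_potential_def x_def add.assoc)
  ultimately show ?thesis by simp
qed

lemma exp_neg_step_le:
  fixes l A B w :: real
  assumes "0 \<le> l" "B \<le> A" "0 \<le> B"
  shows "A * exp (- l * (w + 1)) + B * exp (- l * (w - 1)) \<le> (A + B) * cosh l * exp (- l * w)"
proof -
  have "(A + B) * cosh l * exp (- l * w) - (A * exp (- l * (w + 1)) + B * exp (- l * (w - 1)))
     = exp (- l * w) * ((A - B) * (exp l - exp (- l))) / 2"
    by (simp add: cosh_field_def field_simps algebra_simps flip: exp_add)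
  moreover have "0 \<le> (A - B) * (exp l - exp (- l))" using assms by (intro mult_nonneg_nonneg) simp_all
  ultimately show ?thesis by (smt (verit) divide_nonneg_pos exp_gt_zero mult_nonneg_nonneg)
qed

lemma nn_count_down_step:
  fixes l :: real and c :: int
  assumes "0 \<le> l" "0 \<le> z"
  shows "real (nn_count r (z + 1)) * exp (- l * of_int (z + 1 - c))
       + real (nn_count r (z - 1)) * exp (- l * of_int (z - 1 - c))
     \<le> real (nn_count (Suc r) z) * cosh l * exp (- l * of_int (z - c))"
  using exp_neg_step_le[of l "real (nn_count r (z - 1))" "real (nn_count r (z + 1))" "z - c"]
    nn_count_diff_le_add[of z r] nn_count_Suc[of z r] assms
  by (simp add: algebra_simps)

lemma nn_count_up_step:
  fixes l :: real
  assumes "0 < l" "0 \<le> z"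
  shows "real (nn_count r (z + 1)) * up_potential l (z + 1)
       + real (nn_count r (z - 1)) * up_potential l (z - 1)
     \<le> real (nn_count (Suc r) z) * cosh l * up_potential l z"
proof -
  have "z * int (nn_count r (z + 1)) \<le> (z + 2) * int (nn_count r (z - 1))"
  proof (cases "z = 0")
    case True
    then show ?thesis by simp
  next
    case False
    then show ?thesis using nn_count_ratio[of z r] assms by simp
  qed
  then have "real_of_int z * real (nn_count r (z + 1)) \<le> (real_of_int z + 2) * real (nn_count r (z - 1))"
    by (metis (mono_tags) of_int_add of_int_le_iff of_int_mult of_int_numeral of_int_of_nat_eq)
  then show ?thesis
    using up_potential_step[OF assms, of "real (nn_count r (z + 1))" "real (nn_count r (z - 1))"]
      nn_count_Suc[of z r] assms
    by (simp add: algebra_simps)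
qed

lemma up_potential_ratio_le:
  assumes l: "0 < l" and z: "0 \<le> z" and a: "0 \<le> a"
  shows "up_potential l z / up_potential l (z + a) \<le> 4 * (1 + l * a) * exp (- (l * a))"
proof -
  define v where "v = l * (z + 1)"
  have v: "0 < v" using l z by (simp add: v_def)
  have w: "0 \<le> l * a" using l a by simp
  have pos: "0 < v * sinh (v + l * a)" using v w by simp
  have cancel: "l * (S / (l * d)) = S / d" for S d
    using l by simp
  have "v + l * a = l * (z + a + 1)" by (simp add: v_def algebra_simps)
  then have e: "up_potential l z = l * (sinh v / v)"
    "up_potential l (z + a) = l * (sinh (v + l * a) / (v + l * a))"
    unfolding up_potential_def v_def cancel by (simp_all add: add.assoc)
  have "up_potential l z / up_potential l (z + a) = sinh v * (v + l * a) / (v * sinh (v + l * a))"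
    unfolding e using l v w by (simp add: field_simps)
  also have "\<dots> \<le> 4 * (1 + l * a) * exp (- (l * a))"
    using sinh_mult_add_le[OF v w] pos by (simp add: pos_divide_le_eq ac_simps)
  finally show ?thesis .
qed

lemma card_nn_paths_reach_below_le:
  fixes l :: real and c :: int
  assumes "0 \<le> l" "j \<le> r"
  shows "real (card {s \<in> nn_paths r z. \<exists>i\<le>j. s i \<le> c})
       \<le> real (nn_count r z) * exp (- l * (z - c)) * cosh l ^ j"
proof (rule card_nn_paths_hitting_le[where h = "\<lambda>y. exp (- l * of_int (y - c))"])
  show "1 \<le> exp (- l * of_int (y - c))" if "y \<le> c" for y
    using that assms mult_nonneg_nonpos[of l "of_int (y - c)"] by simp
qed (use assms nn_count_down_step cosh_real_ge_1 in simp_all)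

lemma card_nn_paths_reach_above_le:
  fixes l :: real and c :: int
  assumes "0 < l" "0 \<le> c" "j \<le> r"
  shows "real (card {s \<in> nn_paths r z. \<exists>i\<le>j. c \<le> s i})
       \<le> real (nn_count r z) * (up_potential l z / up_potential l c) * cosh l ^ j"
proof (rule card_nn_paths_hitting_le[where h = "\<lambda>y. up_potential l (of_int y) / up_potential l (of_int c)"])
  have pos: "0 < up_potential l c" using up_potential_pos assms by simp
  show "0 \<le> up_potential l y / up_potential l c" if "0 \<le> y" for y :: int
    using up_potential_pos[of l y] pos that assms by simp
  show "1 \<le> up_potential l y / up_potential l c" if "c \<le> y" for y :: int
    using up_potential_mono[of l c y] pos that assms by simp
  show "real (nn_count r (y + 1)) * (up_potential l (y + 1) / up_potential l c)
      + real (nn_count r (y - 1)) * (up_potential l (y - 1) / up_potential l c)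
      \<le> real (nn_count (Suc r) y) * cosh l * (up_potential l y / up_potential l c)" if "0 \<le> y" for r and y :: int
    using divide_right_mono[OF nn_count_up_step[of l y r], of "up_potential l c"] pos that assms
    by (simp add: add_divide_distrib)
qed (use assms cosh_real_ge_1 in simp_all)

lemma card_nn_paths_exit_le:
  fixes l :: real and a :: int
  assumes l: "0 < l" and a: "0 \<le> a" and z: "0 \<le> z" and "j \<le> r"
  shows "real (card {t \<in> nn_paths r z. \<exists>i\<le>j. a \<le> \<bar>t i - t 0\<bar>})
       \<le> real (nn_count r z) * (5 + 4 * l * a) * exp (- l * a) * cosh l ^ j"
proof -
  let ?below = "{t \<in> nn_paths r z. \<exists>i\<le>j. t i \<le> z - a}"
  let ?above = "{t \<in> nn_paths r z. \<exists>i\<le>j. z + a \<le> t i}"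
  let ?N = "real (nn_count r z)"
  have "{t \<in> nn_paths r z. \<exists>i\<le>j. a \<le> \<bar>t i - t 0\<bar>} \<subseteq> ?below \<union> ?above"
  proof
    fix t assume "t \<in> {t \<in> nn_paths r z. \<exists>i\<le>j. a \<le> \<bar>t i - t 0\<bar>}"
    then obtain i where "t \<in> nn_paths r z" "i \<le> j" "a \<le> \<bar>t i - z\<bar>"
      using nn_paths_start by blast
    then show "t \<in> ?below \<union> ?above"
      by (cases "t i \<le> z") auto
  qed
  then have "card {t \<in> nn_paths r z. \<exists>i\<le>j. a \<le> \<bar>t i - t 0\<bar>} \<le> card (?below \<union> ?above)"
    by (intro card_mono) (simp_all add: finite_nn_paths)
  also have "\<dots> \<le> card ?below + card ?above"
    by (rule card_Un_le)
  finally have "card {t \<in> nn_paths r z. \<exists>i\<le>j. a \<le> \<bar>t i - t 0\<bar>} \<le> card ?below + card ?above" .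
  moreover have "real (card ?below) \<le> ?N * exp (- l * a) * cosh l ^ j"
    using card_nn_paths_reach_below_le[of l j r z "z - a"] l \<open>j \<le> r\<close> by simp
  moreover have "real (card ?above) \<le> ?N * (4 * (1 + l * a) * exp (- l * a)) * cosh l ^ j"
  proof -
    have "real (card ?above) \<le> ?N * (up_potential l z / up_potential l (z + a)) * cosh l ^ j"
      using card_nn_paths_reach_above_le[of l "z + a" j r z] l a z \<open>j \<le> r\<close> by simp
    also have "\<dots> \<le> ?N * (4 * (1 + l * a) * exp (- l * a)) * cosh l ^ j"
      using up_potential_ratio_le[of l z a] l a z by (intro mult_right_mono mult_left_mono) simp_all
    finally show ?thesis .
  qed
  ultimately show ?thesis by (simp add: algebra_simps)
qed

lemma five_plus_four_mult_exp_le: "0 \<le> (w :: real) \<Longrightarrow> (5 + 4 * w) * exp (- w / 2) \<le> 20 * exp (- w / 4)"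
proof -
  assume w: "0 \<le> w"
  have "5 + 4 * w \<le> 20 * exp (w / 4)"
    using exp_ge_add_one_self[of "w / 4"] w by linarith
  then have "(5 + 4 * w) * exp (- w / 2) \<le> 20 * exp (w / 4) * exp (- w / 2)"
    by (rule mult_right_mono) simp
  also have "\<dots> = 20 * exp (- w / 4)"
    by (simp flip: exp_add)
  finally show ?thesis .
qed

text \<open>Optimising the exponential tilt: level \<open>a = \<lfloor>u\<rfloor> + 1\<close> and \<open>l = a / (2L)\<close>.\<close>
lemma card_nn_paths_exit_gaussian_le:
  assumes L: "1 \<le> L" "L \<le> r" and u: "0 < u"
  shows "real (card {t \<in> nn_paths r z. \<exists>i\<le>L. u < real_of_int \<bar>t i - t 0\<bar>})
       \<le> 20 * exp (- u\<^sup>2 / (8 * L)) * real (nn_count r z)"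
proof (cases "0 \<le> z")
  case False
  then show ?thesis by (simp add: nn_paths_neg)
next
  case z: True
  define a where "a = \<lfloor>u\<rfloor> + 1"
  define l where "l = real_of_int a / (2 * L)"
  define w where "w = l * a"
  let ?N = "real (nn_count r z)"
  have a: "1 \<le> a" "u < a" using u by (simp_all add: a_def)
  have l: "0 < l" using a L by (simp add: l_def)
  have w: "0 \<le> w" "w = (real_of_int a)\<^sup>2 / (2 * L)"
    using l a by (simp_all add: w_def l_def power2_eq_square)
  have "{t \<in> nn_paths r z. \<exists>i\<le>L. u < real_of_int \<bar>t i - t 0\<bar>}
      \<subseteq> {t \<in> nn_paths r z. \<exists>i\<le>L. a \<le> \<bar>t i - t 0\<bar>}"
  proof -
    have "a \<le> d" if "u < real_of_int d" for d
      using that floor_less_iff[of u d] by (simp add: a_def)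
    then show ?thesis by blast
  qed
  then have "real (card {t \<in> nn_paths r z. \<exists>i\<le>L. u < real_of_int \<bar>t i - t 0\<bar>})
      \<le> real (card {t \<in> nn_paths r z. \<exists>i\<le>L. a \<le> \<bar>t i - t 0\<bar>})"
    by (intro of_nat_mono card_mono) (simp_all add: finite_nn_paths)
  also have "\<dots> \<le> ?N * (5 + 4 * w) * exp (- w) * cosh l ^ L"
    using card_nn_paths_exit_le[of l a z L r] l a z L by (simp add: w_def mult.assoc)
  also have "\<dots> \<le> ?N * (5 + 4 * w) * exp (- w) * exp (w / 2)"
  proof -
    have "cosh l ^ L \<le> exp (l\<^sup>2 * L)"
      using cosh_power_le_exp[of l L] l by simp
    also have "l\<^sup>2 * L = w / 2"
      using L by (simp add: w_def l_def power2_eq_square field_simps)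
    finally show ?thesis using w by (intro mult_left_mono) simp_all
  qed
  also have "\<dots> = ?N * ((5 + 4 * w) * exp (- w / 2))"
    by (simp add: mult.assoc flip: exp_add)
  also have "\<dots> \<le> ?N * (20 * exp (- w / 4))"
    using five_plus_four_mult_exp_le[OF w(1)] by (intro mult_left_mono) simp_all
  also have "\<dots> \<le> ?N * (20 * exp (- u\<^sup>2 / (8 * L)))"
  proof -
    have "u\<^sup>2 \<le> (real_of_int a)\<^sup>2" using a u by (intro power_mono) simp_all
    then have "- w / 4 \<le> - u\<^sup>2 / (8 * L)" using L by (simp add: w(2) divide_right_mono)
    then show ?thesis by (intro mult_left_mono) simp_all
  qed
  finally show ?thesis by (simp add: mult.commute)
qed

text \<open>Markov property at time \<open>m\<close>: a bound uniform in the starting point survives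
  averaging over the first \<open>m\<close> steps.\<close>
lemma card_nn_paths_drop_le:
  assumes bound: "\<And>z. real (card {t \<in> nn_paths r z. R t}) \<le> c * real (nn_count r z)"
  shows "real (card {s \<in> nn_paths (m + r) x. R (path_drop m s)}) \<le> c * real (nn_count (m + r) x)"
proof (induction m arbitrary: x)
  case 0
  then show ?case using bound by (simp add: path_drop_def)
next
  case (Suc m)
  show ?case
  proof (cases "0 \<le> x")
    case False
    then show ?thesis by (simp add: nn_paths_neg nn_count_neg)
  next
    case True
    have "real (card {s \<in> nn_paths (Suc m + r) x. R (path_drop (Suc m) s)})
        = real (card {t \<in> nn_paths (m + r) (x + 1). R (path_drop m t)})
          + real (card {t \<in> nn_paths (m + r) (x - 1). R (path_drop m t)})"
      using card_nn_paths_Suc_filter[OF True, of "m + r" "\<lambda>t. R (path_drop m t)"]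
      by (simp add: path_drop_Suc)
    also have "\<dots> \<le> c * real (nn_count (m + r) (x + 1)) + c * real (nn_count (m + r) (x - 1))"
      using Suc.IH[of "x + 1"] Suc.IH[of "x - 1"] by (rule add_mono)
    also have "\<dots> = c * real (nn_count (Suc m + r) x)"
      using nn_count_Suc[OF True, of "m + r"] by (simp add: algebra_simps)
    finally show ?thesis .
  qed
qed

lemma of_int_Max_gt_iff:
  fixes f :: "nat \<Rightarrow> int"
  assumes "finite A" "A \<noteq> {}"
  shows "u < real_of_int (MAX i\<in>A. f i) \<longleftrightarrow> (\<exists>i\<in>A. u < real_of_int (f i))"
proof -
  have "real_of_int (MAX i\<in>A. f i) = (MAX i\<in>A. real_of_int (f i))"
    using mono_Max_commute[of real_of_int "f ` A"] assms by (simp add: mono_def image_image)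
  then show ?thesis using assms by (simp add: Max_gr_iff)
qed

lemma prob_Pnx_exit_le:
  assumes x: "0 \<le> x" and mk: "m < k" and kn: "k \<le> n" and u: "0 < u"
  shows "measure_pmf.prob (Pnx n x) {s. real_of_int (MAX i\<in>{m..k}. \<bar>s i - s m\<bar>) > u}
       \<le> 20 * exp (- u\<^sup>2 / (8 * real (k - m)))"
proof -
  define L where "L = k - m"
  define r where "r = n - m"
  define B where "B = 20 * exp (- u\<^sup>2 / (8 * real L))"
  define R where "R = (\<lambda>t :: nat \<Rightarrow> int. \<exists>i\<le>L. u < real_of_int \<bar>t i - t 0\<bar>)"
  have n: "n = m + r" using mk kn by (simp add: r_def)
  have "real_of_int (MAX i\<in>{m..k}. \<bar>s i - s m\<bar>) > u \<longleftrightarrow> R (path_drop m s)" for s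
  proof -
    have "(\<exists>i\<in>{m..k}. u < real_of_int \<bar>s i - s m\<bar>) \<longleftrightarrow> R (path_drop m s)"
    proof
      assume "\<exists>i\<in>{m..k}. u < real_of_int \<bar>s i - s m\<bar>"
      then obtain i where "i \<in> {m..k}" "u < real_of_int \<bar>s i - s m\<bar>" by blast
      then show "R (path_drop m s)"
        unfolding R_def path_drop_def L_def by (intro exI[of _ "i - m"]) auto
    next
      assume "R (path_drop m s)"
      then obtain j where "j \<le> L" "u < real_of_int \<bar>s (j + m) - s m\<bar>"
        unfolding R_def path_drop_def by auto
      then show "\<exists>i\<in>{m..k}. u < real_of_int \<bar>s i - s m\<bar>"
        unfolding L_def using mk by (intro bexI[of _ "j + m"]) auto
    qed
    then show ?thesis using of_int_Max_gt_iff[of "{m..k}"] mk by simp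
  qed
  then have event: "nn_paths n x \<inter> {s. real_of_int (MAX i\<in>{m..k}. \<bar>s i - s m\<bar>) > u}
      = {s \<in> nn_paths (m + r) x. R (path_drop m s)}"
    using n by auto
  have "real (card {s \<in> nn_paths (m + r) x. R (path_drop m s)}) \<le> B * real (nn_count n x)"
    unfolding n
  proof (rule card_nn_paths_drop_le)
    show "real (card {t \<in> nn_paths r z. R t}) \<le> B * real (nn_count r z)" for z
      using card_nn_paths_exit_gaussian_le[of L r u z] mk kn u by (simp add: B_def R_def L_def r_def)
  qed
  moreover have pos: "0 < nn_count n x" using nn_count_pos[OF x] .
  then have nonempty: "nn_paths n x \<noteq> {}" by (auto simp: nn_count_def)
  have "measure_pmf.prob (Pnx n x) {s. real_of_int (MAX i\<in>{m..k}. \<bar>s i - s m\<bar>) > u}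
      = real (card {s \<in> nn_paths (m + r) x. R (path_drop m s)}) / real (nn_count n x)"
    unfolding Pnx_def measure_pmf_of_set[OF nonempty finite_nn_paths] event nn_count_def ..
  ultimately show ?thesis using pos by (simp add: pos_divide_le_eq B_def L_def)
qed

theorem theoremA8:
  shows "\<exists>C c :: real. C > 0 \<and> c > 0 \<and>
    (\<forall>(x::int) (n::nat) (m::nat) (k::nat) (u::real).
       0 \<le> x \<longrightarrow> m < k \<longrightarrow> k \<le> n \<longrightarrow> u > 0 \<longrightarrow>
       measure_pmf.prob (Pnx n x)
         {s. real_of_int (MAX i\<in>{m..k}. \<bar>s i - s m\<bar>) > u}
       \<le> C * exp (- c * u\<^sup>2 / real (k - m)))"
proof (intro exI conjI allI impI)
  show "(20 :: real) > 0" "(1 / 8 :: real) > 0" by simp_all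
  fix x :: int and n m k :: nat and u :: real
  assume "0 \<le> x" "m < k" "k \<le> n" "u > 0"
  then show "measure_pmf.prob (Pnx n x) {s. real_of_int (MAX i\<in>{m..k}. \<bar>s i - s m\<bar>) > u}
      \<le> 20 * exp (- (1 / 8) * u\<^sup>2 / real (k - m))"
    using prob_Pnx_exit_le by (simp add: field_simps)
qed

end
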